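(* Under any CLC choice model, the pseudo-competitive property holds: for every seller $i\in\mathcal N$ and all price vectors $\mathbf p,\mathbf p'\in[0,\bar v]^N$ such that (1) $\{j\in\mathcal N: p_j\ge p_i\}=\{j\in\mathcal N: p'_j\ge p_i\}$ and (2) $p_j=p'_j$ for every $j$ in this set, we have $R_i(\mathbf p)=R_i(\mathbf p')$. (In particular $p_i=p'_i$, and the revenue of $i$ is unchanged when any seller pricing strictly below $p_i$ changes its price to another value strictly below $p_i$.)
   Context: CLC setup. There are $N$ sellers $\mathcal N=\{1,\dots,N\}$, each selling one item, and a unit mass of customers, each buying at most one item. Items have a price attribute (indexed $0$) and $K$ non-price attributes indexed by $\mathcal A=\{1,\dots,K\}$; $\bar{\mathcal A}=\{0\}\cup\mathcal A$. Non-price attribute $k$ takes values in an arbitrary set $\mathcal V^k$; prices lie in $\mathcal V=[0,\bar v]$ for a fixed $\bar v>0$. Seller $i$'s item has fixed non-price attribute values $v_i^k\in\mathcal V^k$ and price $p_i\in\mathcal V$ chosen by seller $i$; $\mathbf p=(p_1,\dots,p_N)$, and $v_i^0:=p_i$. Each customer $c$ has: a strict total order $\succ_c$ on $\bar{\mathcal A}$ (attribute importance); for each attribute $k$ a complete transitive weak preference $\succsim_c^k$ on its value set, with strict part $\succ_c^k$ and indifference $\sim_c^k$ (and $v\sim_c^k v$), where for price $p\succ_c^0p'$ iff $p<p'$ and $p\sim_c^0p'$ iff $p=p'$; a willingness-to-pay $w_c\in[0,\bar v]$; a set $\mathcal C_c\subseteq\mathcal V^1\times\cdots\times\mathcal V^K$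 of admissible non-price attribute vectors; and a strict tie-breaking order over sellers. Customer $c$ lexicographically prefers item $i$ to item $j$ if there is an attribute $k$ with $v_i^{k'}\sim_c^{k'}v_j^{k'}$ for all $k'\succ_c k$ and $v_i^k\succ_c^k v_j^k$; if no such $k$ exists, the tie-breaking order decides. Under the Consider-then-Choose with Lexicographic Choice (CLC) model, customer $c$ forms the consideration set $\mathcal N_c=\{i\in\mathcal N: p_i\le w_c,\ (v_i^1,\dots,v_i^K)\in\mathcal C_c\}$, buys nothing if it is empty, and otherwise buys the top-ranked item of $\mathcal N_c$ under this lexicographic order (with tie-breaking). An instance of CLC choice is a joint distribution $\mathcal G$ of these customer primitives; the conditional distribution of $w_c$ given the other primitives is assumed to have a Lipschitz continuous density. $D_i(\mathbf p)$ is the probability a customer buys from seller $i$ and $R_i(\mathbf p)=p_iD_i(\mathbf p)$ is seller $i$'s revenue, also written $R_i(p_i,\mathbf p_{-i})$. *)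

theory Defs
  imports "HOL-Probability.Probability"
begin

text \<open>Sellers are the elements of a finite type 'n (so N = CARD('n)).
Attributes are indexed by naturals: 0 is price, 1..K are the non-price attributes.
All non-price attribute values live in one type 'v (the sets V^k are subsets of it).
vattr i k is the (fixed) value of non-price attribute k of seller i's item.\<close>

record ('n, 'v) customer =
  imp   :: "nat \<Rightarrow> nat \<Rightarrow> bool"          \<comment> \<open>imp c k k': attribute k is more important than k'\<close>
  apref :: "nat \<Rightarrow> 'v \<Rightarrow> 'v \<Rightarrow> bool"     \<comment> \<open>weak preference on values of non-price attribute k\<close>
  wtp   :: real
  adm   :: "(nat \<Rightarrow> 'v) set"             \<comment> \<open>admissible non-price attribute vectors (restricted to 1..K)\<close>
  tb    :: "'n \<Rightarrow> 'n \<Rightarrow> bool"           \<comment> \<open>strict tie-breaking order over sellers\<close>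

definition valid_customer :: "nat \<Rightarrow> real \<Rightarrow> ('n, 'v) customer \<Rightarrow> bool" where
  "valid_customer K vbar c \<longleftrightarrow>
     \<comment> \<open>strict total order on attributes {0..K}\<close>
     (\<forall>k. \<not> imp c k k) \<and>
     (\<forall>a b d. imp c a b \<longrightarrow> imp c b d \<longrightarrow> imp c a d) \<and>
     (\<forall>a\<in>{0..K}. \<forall>b\<in>{0..K}. a \<noteq> b \<longrightarrow> imp c a b \<or> imp c b a) \<and>
     (\<forall>a b. imp c a b \<longrightarrow> a \<in> {0..K} \<and> b \<in> {0..K}) \<and>
     \<comment> \<open>complete, transitive weak preferences on non-price attribute values\<close>
     (\<forall>k\<in>{1..K}. (\<forall>x y. apref c k x y \<or> apref c k y x) \<and>
                 (\<forall>x y z. apref c k x y \<longrightarrow> apref c k y z \<longrightarrow> apref c k x z)) \<and>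
     \<comment> \<open>willingness to pay\<close>
     wtp c \<in> {0..vbar} \<and>
     \<comment> \<open>strict total tie-breaking order over sellers\<close>
     (\<forall>i. \<not> tb c i i) \<and>
     (\<forall>i j l. tb c i j \<longrightarrow> tb c j l \<longrightarrow> tb c i l) \<and>
     (\<forall>i j. i \<noteq> j \<longrightarrow> tb c i j \<or> tb c j i)"

definition attr_wpref ::
  "('n, 'v) customer \<Rightarrow> ('n \<Rightarrow> nat \<Rightarrow> 'v) \<Rightarrow> ('n \<Rightarrow> real) \<Rightarrow> nat \<Rightarrow> 'n \<Rightarrow> 'n \<Rightarrow> bool" where
  "attr_wpref c vattr p k i j =
     (if k = 0 then p i \<le> p j else apref c k (vattr i k) (vattr j k))"

definition attr_spref where
  "attr_spref c vattr p k i j \<longleftrightarrow> attr_wpref c vattr p k i j \<and> \<not> attr_wpref c vattr p k j i"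

definition attr_indiff where
  "attr_indiff c vattr p k i j \<longleftrightarrow> attr_wpref c vattr p k i j \<and> attr_wpref c vattr p k j i"

definition lex_prefers ::
  "nat \<Rightarrow> ('n, 'v) customer \<Rightarrow> ('n \<Rightarrow> nat \<Rightarrow> 'v) \<Rightarrow> ('n \<Rightarrow> real) \<Rightarrow> 'n \<Rightarrow> 'n \<Rightarrow> bool" where
  "lex_prefers K c vattr p i j \<longleftrightarrow>
     (\<exists>k\<in>{0..K}. (\<forall>k'\<in>{0..K}. imp c k' k \<longrightarrow> attr_indiff c vattr p k' i j)
                 \<and> attr_spref c vattr p k i j)
     \<or> ((\<forall>k\<in>{0..K}. attr_indiff c vattr p k i j) \<and> tb c i j)"

definition consideration_set ::
  "nat \<Rightarrow> ('n, 'v) customer \<Rightarrow> ('n \<Rightarrow> nat \<Rightarrow> 'v) \<Rightarrow> ('n \<Rightarrow> real) \<Rightarrow> 'n set" where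
  "consideration_set K c vattr p =
     {i. p i \<le> wtp c \<and> restrict (vattr i) {1..K} \<in> adm c}"

definition buys ::
  "nat \<Rightarrow> ('n, 'v) customer \<Rightarrow> ('n \<Rightarrow> nat \<Rightarrow> 'v) \<Rightarrow> ('n \<Rightarrow> real) \<Rightarrow> 'n \<Rightarrow> bool" where
  "buys K c vattr p i \<longleftrightarrow>
     i \<in> consideration_set K c vattr p \<and>
     (\<forall>j\<in>consideration_set K c vattr p. j \<noteq> i \<longrightarrow> lex_prefers K c vattr p i j)"

text \<open>G is the distribution of customer primitives.\<close>
definition demand ::
  "('n, 'v) customer measure \<Rightarrow> nat \<Rightarrow> ('n \<Rightarrow> nat \<Rightarrow> 'v) \<Rightarrow> ('n \<Rightarrow> real) \<Rightarrow> 'n \<Rightarrow> real" where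
  "demand G K vattr p i = measure G {c \<in> space G. buys K c vattr p i}"

definition revenue ::
  "('n, 'v) customer measure \<Rightarrow> nat \<Rightarrow> ('n \<Rightarrow> nat \<Rightarrow> 'v) \<Rightarrow> ('n \<Rightarrow> real) \<Rightarrow> 'n \<Rightarrow> real" where
  "revenue G K vattr p i = p i * demand G K vattr p i"

end

theory Submission
  imports Defs
begin

text \<open>Whether a customer buys from seller i depends on the other prices only through
  which sellers are considered and through how their prices compare with p i. A customer
  who cannot afford p i buys nothing from i anyway; for one who can, a seller priced below
  p i is considered and beats i on price under both p and p', while every other seller
  keeps its price. Hence the set of customers buying from i, and so the revenue of i,
  is the same under p and p'.\<close>

definition agrees_above :: "('n \<Rightarrow> real) \<Rightarrow> ('n \<Rightarrow> real) \<Rightarrow> 'n \<Rightarrow> bool" where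
  "agrees_above p p' i \<longleftrightarrow> (\<forall>j. p i \<le> p j \<longrightarrow> p' j = p j) \<and> (\<forall>j. p j < p i \<longrightarrow> p' j < p i)"

lemma agrees_aboveI:
  assumes "{j. p j \<ge> p i} = {j. p' j \<ge> p i}" and "\<forall>j\<in>{j. p j \<ge> p i}. p j = p' j"
  shows "agrees_above p p' i"
  unfolding agrees_above_def
proof (intro conjI allI impI)
  fix j
  assume "p i \<le> p j"
  then have "j \<in> {j. p j \<ge> p i}" by (rule CollectI)
  with assms(2) have "p j = p' j" by (rule bspec)
  then show "p' j = p j" by (rule sym)
next
  fix j
  assume "p j < p i"
  then have "j \<notin> {j. p' j \<ge> p i}" unfolding assms(1)[symmetric] by simp
  then show "p' j < p i" by simp
qed

lemma agrees_above_same_price: "agrees_above p p' i \<Longrightarrow> p' i = p i"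
  unfolding agrees_above_def by blast

lemma agrees_above_price_order:
  assumes "agrees_above p p' i"
  shows "p i \<le> p j \<longleftrightarrow> p' i \<le> p' j" and "p j \<le> p i \<longleftrightarrow> p' j \<le> p' i"
proof -
  have "p' i = p i" using assms by (rule agrees_above_same_price)
  moreover have "p i \<le> p j \<Longrightarrow> p' j = p j" "p j < p i \<Longrightarrow> p' j < p i"
    using assms unfolding agrees_above_def by blast+
  ultimately show "p i \<le> p j \<longleftrightarrow> p' i \<le> p' j" and "p j \<le> p i \<longleftrightarrow> p' j \<le> p' i"
    by linarith+
qed

lemma lex_prefers_cong:
  assumes "p i \<le> p j \<longleftrightarrow> p' i \<le> p' j" and "p j \<le> p i \<longleftrightarrow> p' j \<le> p' i"
  shows "lex_prefers K c vattr p i j \<longleftrightarrow> lex_prefers K c vattr p' i j"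
proof -
  have "attr_wpref c vattr p k i j = attr_wpref c vattr p' k i j"
    and "attr_wpref c vattr p k j i = attr_wpref c vattr p' k j i" for k
    using assms by (simp_all add: attr_wpref_def)
  then have "attr_spref c vattr p k i j = attr_spref c vattr p' k i j"
    and "attr_indiff c vattr p k i j = attr_indiff c vattr p' k i j" for k
    by (simp_all add: attr_spref_def attr_indiff_def)
  then show ?thesis
    unfolding lex_prefers_def by simp
qed

lemma consideration_set_agrees_above:
  assumes "agrees_above p p' i" and "p i \<le> wtp c"
  shows "j \<in> consideration_set K c vattr p \<longleftrightarrow> j \<in> consideration_set K c vattr p'"
proof (cases "p i \<le> p j")
  case True
  with assms(1) have "p' j = p j" unfolding agrees_above_def by blast
  then show ?thesis by (simp add: consideration_set_def)
next
  case False
  with assms(1) have "p' j < p i" unfolding agrees_above_def by auto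
  with False assms(2) show ?thesis by (simp add: consideration_set_def)
qed

lemma buys_agrees_above:
  assumes "agrees_above p p' i"
  shows "buys K c vattr p i \<longleftrightarrow> buys K c vattr p' i"
proof (cases "p i \<le> wtp c")
  case True
  have "lex_prefers K c vattr p i j \<longleftrightarrow> lex_prefers K c vattr p' i j" for j
    using agrees_above_price_order[OF assms] by (rule lex_prefers_cong)
  with consideration_set_agrees_above[OF assms True] show ?thesis
    unfolding buys_def Ball_def by simp
next
  case False
  with agrees_above_same_price[OF assms] show ?thesis
    by (simp add: buys_def consideration_set_def)
qed

lemma revenue_agrees_above:
  assumes "agrees_above p p' i"
  shows "revenue G K vattr p i = revenue G K vattr p' i"
proof -
  have "{c \<in> space G. buys K c vattr p i} = {c \<in> space G. buys K c vattr p' i}"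
    using buys_agrees_above[OF assms] by blast
  with agrees_above_same_price[OF assms] show ?thesis
    unfolding revenue_def demand_def by simp
qed

theorem theorem4p1:
  fixes G :: "('n::finite, 'v) customer measure"
    and K :: nat and vbar :: real
    and vattr :: "'n \<Rightarrow> nat \<Rightarrow> 'v"
    and p p' :: "'n \<Rightarrow> real" and i :: 'n
  assumes "prob_space G"
    and "vbar > 0"
    and "\<forall>c\<in>space G. valid_customer K vbar c"
    and "\<forall>j. p j \<in> {0..vbar}" and "\<forall>j. p' j \<in> {0..vbar}"
    and "{j. p j \<ge> p i} = {j. p' j \<ge> p i}"
    and "\<forall>j\<in>{j. p j \<ge> p i}. p j = p' j"
  shows "revenue G K vattr p i = revenue G K vattr p' i"
  using assms(6,7) by (intro revenue_agrees_above agrees_aboveI)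

end
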